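(* Let $\alpha\neq0$, $\sigma\in\mathbb{R}\setminus\{0,1\}$, $K>0$, $C\in\mathbb{R}$. For $\beta\in(0,1)$ and $q>0$ with $1+\alpha\sigma q>0$ define $$u_\beta(q)=\frac{K\sigma}{\sigma-1}(1+\alpha\sigma q)^{\beta-\frac1\sigma}q^{1-\beta}\left[1+\Big(\beta-\frac1\sigma\Big)\int_0^1(1-t)^{-\beta}(1+t\alpha\sigma q)^{-(1-\frac1\sigma)}\,dt\right]+C$$ (which equals $\frac{K\sigma}{\sigma-1}(1+\alpha\sigma q)^{\beta-\frac1\sigma}q^{1-\beta}[1+\frac{\beta-1/\sigma}{1-\beta}{}_2F_1(1-\frac1\sigma,1;2-\beta;-\alpha\sigma q)]+C$ when $|\alpha\sigma q|<1$). (i) (HARA limit) For every $q>0$ with $1+\alpha\sigma q>0$, $$\lim_{\beta\to0^+}u_\beta(q)=\frac{K}{\alpha(\sigma-1)}\Big[(1+\alpha\sigma q)^{\frac{\sigma-1}{\sigma}}-1\Big]+C.$$ (ii) (CREMR limit) Suppose moreover $\alpha\sigma>0$ and $1+\frac1\sigma>0$, and for $\beta\in(0,1)$ put $$D_\beta=\frac{K\sigma}{\sigma-1}\,\frac{\Gamma(1-\beta)\,\Gamma(\frac1\sigma)}{\Gamma(\frac1\sigma-\beta)}\,(\alpha\sigma)^{\beta-1}$$ (with $1/\Gamma$ equal to $0$ at non-positive integers). Then for every $q>\frac{1}{\alpha\sigma}$, $$\lim_{\beta\to1^-}\big(u_\beta(q)+D_\beta\big)=\frac{K\sigma}{\sigma-1}\,\frac{(1+\alpha\sigma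 q)^{1-\frac1\sigma}}{q}\left[q-\frac{\sigma-1}{\alpha\sigma}\,{}_2F_1\!\left(1,1;1+\tfrac1\sigma;-\tfrac{1}{\alpha\sigma q}\right)\right]+C .$$ The HARA function in (i) has $u'(q)=K(1+\alpha\sigma q)^{-1/\sigma}$ and $-u'(q)/u''(q)=(1+\alpha\sigma q)/\alpha$; the CREMR function in (ii) has $u'(q)=K(1+\alpha\sigma q)^{1-\frac1\sigma}q^{-1}$ and satisfies $-\frac{d\ln[u'(q)+qu''(q)]}{d\ln[q u'(q)]}=\frac{1}{\sigma-1}$.
   Context: ${}_2F_1(a,b;c;z)=\sum_{n\ge0}\frac{(a)_n(b)_n}{(c)_n}\frac{z^n}{n!}$ ($|z|<1$) is the Gauss hypergeometric function with rising Pochhammer symbols $(a)_n$; $\Gamma$ is the gamma function. *)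

theory Defs
  imports "HOL-Analysis.Analysis"
begin

text \<open>Gauss hypergeometric function as its power series (meaningful for |z| < 1).\<close>
definition hyp2F1 :: "real \<Rightarrow> real \<Rightarrow> real \<Rightarrow> real \<Rightarrow> real" where
  "hyp2F1 a b c z =
     (\<Sum>n. pochhammer a n * pochhammer b n / pochhammer c n * z ^ n / fact n)"

definition u_beta :: "real \<Rightarrow> real \<Rightarrow> real \<Rightarrow> real \<Rightarrow> real \<Rightarrow> real \<Rightarrow> real" where
  "u_beta K \<sigma> \<alpha> C \<beta> q =
     K * \<sigma> / (\<sigma> - 1) * (1 + \<alpha> * \<sigma> * q) powr (\<beta> - 1 / \<sigma>) * q powr (1 - \<beta>)
       * (1 + (\<beta> - 1 / \<sigma>) *
            integral {0..1} (\<lambda>t. (1 - t) powr (- \<beta>) * (1 + t * \<alpha> * \<sigma> * q) powr (- (1 - 1 / \<sigma>))))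
     + C"

text \<open>D_beta, with 1/Gamma written as rGamma (zero at non-positive integers).\<close>
definition D_beta :: "real \<Rightarrow> real \<Rightarrow> real \<Rightarrow> real \<Rightarrow> real" where
  "D_beta K \<sigma> \<alpha> \<beta> =
     K * \<sigma> / (\<sigma> - 1) * (Gamma (1 - \<beta>) * Gamma (1 / \<sigma>) * rGamma (1 / \<sigma> - \<beta>))
       * (\<alpha> * \<sigma>) powr (\<beta> - 1)"

end

theory Submission
  imports Defs
begin

text \<open>
  Put s = 1/\<sigma> and x = \<alpha>\<sigma>q. As \<beta> \<rightarrow> 0 the weight (1 - t)^(-\<beta>) in the integral defining
  u_\<beta> tends to 1 under the integrable bound (1 - t)^(-1/2), and the remaining integral of
  (1 + tx)^(s-1) over [0, 1] is elementary.

  As \<beta> \<rightarrow> 1 that integral diverges. The substitution v = y(1 - t) with y = x/(1 + x) turns it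
  into the incomplete Beta integral B_y(1 - \<beta>, s); the recurrence in the second parameter expresses
  this through B_y(1 - \<beta>, s + 1) = B(1 - \<beta>, s + 1) - \<integral>_y^1 v^(-\<beta>) (1 - v)^s dv, and the complete
  Beta term is exactly cancelled by D_\<beta>. The tail integral that remains is continuous at \<beta> = 1.
  Its value there is matched with the hypergeometric function by expanding 1/(x + t) as a
  geometric series in t/x, which is where q > 1/(\<alpha>\<sigma>), i.e. x > 1, is needed.
\<close>

lemma integrable_one_minus_powr:
  fixes b :: real
  assumes "b > -1"
  shows "(\<lambda>t. (1 - t) powr b) integrable_on {0..1}"
proof -
  have "(\<lambda>t. t powr (1 - 1) * (1 - t) powr (b + 1 - 1)) integrable_on {0..1}"
    using integrable_Beta'[of 1 "b + 1"] assms by simp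
  then show ?thesis
    by (rule integrable_spike_finite[of "{0}", rotated 2]) auto
qed

lemma integrable_one_minus_powr_mult:
  fixes b :: real and g :: "real \<Rightarrow> real"
  assumes "b > -1" and g: "continuous_on {0..1} g"
  shows "(\<lambda>t. (1 - t) powr b * g t) integrable_on {0..1}"
proof -
  have "(\<lambda>t. g t * (1 - t) powr b) absolutely_integrable_on {0..1}"
  proof (rule absolutely_integrable_bounded_measurable_product_real)
    show "g \<in> borel_measurable (lebesgue_on {0..1})"
      by (rule continuous_imp_measurable_on_sets_lebesgue[OF g]) auto
    show "bounded (g ` {0..1})"
      by (rule compact_imp_bounded[OF compact_continuous_image[OF g compact_Icc]])
    show "(\<lambda>t. (1 - t) powr b) absolutely_integrable_on {0..1}"
      using assms(1) by (intro nonnegative_absolutely_integrable_1 integrable_one_minus_powr) auto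
  qed auto
  then show ?thesis
    by (simp add: mult.commute set_lebesgue_integral_eq_integral(1))
qed

lemma tendsto_integral_one_minus_powr_mult_at_right_0:
  fixes g :: "real \<Rightarrow> real"
  assumes g: "continuous_on {0..1} g"
  shows "((\<lambda>\<beta>. integral {0..1} (\<lambda>t. (1 - t) powr (- \<beta>) * g t)) \<longlongrightarrow> integral {0..1} g)
           (at_right 0)"
proof (rule tendsto_at_right_sequentially[where b = "1/2"])
  obtain M where M: "\<And>t. t \<in> {0..1} \<Longrightarrow> norm (g t) \<le> M"
    using compact_imp_bounded[OF compact_continuous_image[OF g compact_Icc]]
    unfolding bounded_iff by blast
  fix S :: "nat \<Rightarrow> real"
  assume S: "\<And>n. 0 < S n" "\<And>n. S n < 1/2" "S \<longlonglongrightarrow> 0"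
  define f where "f n t = (1 - t) powr (- S n) * g t" for n t
  define h where "h t = (1 - t) powr (- 1/2) * M" for t
  have f_int: "f n integrable_on {0..1}" for n
    unfolding f_def using S(2)[of n] by (intro integrable_one_minus_powr_mult g) auto
  have h_int: "h integrable_on {0..1}"
    unfolding h_def by (intro integrable_on_mult_left integrable_one_minus_powr) auto
  have f_le_h: "norm (f n t) \<le> h t" if "t \<in> {0..1}" for n t
  proof -
    have "(1 - t) powr (- S n) \<le> (1 - t) powr (- 1/2)"
      using that S(2)[of n] by (intro powr_mono') auto
    then show ?thesis
      unfolding f_def h_def norm_mult using M[OF that] by (intro mult_mono) auto
  qed
  \<comment> \<open>at t = 1 every f n vanishes, since 0 powr a = 0\<close>
  have f_lim: "(\<lambda>n. f n t) \<longlonglongrightarrow> (if t = 1 then 0 else g t)" if "t \<in> {0..1}" for t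
  proof (cases "t = 1")
    case False
    then have "(\<lambda>n. (1 - t) powr (- S n) * g t) \<longlonglongrightarrow> (1 - t) powr (- 0) * g t"
      using that by (intro tendsto_intros S(3)) auto
    then show ?thesis using False by (simp add: f_def)
  qed (simp add: f_def)
  have "(\<lambda>n. integral {0..1} (f n)) \<longlonglongrightarrow> integral {0..1} (\<lambda>t. if t = 1 then 0 else g t)"
    by (rule dominated_convergence(2)[OF f_int h_int f_le_h f_lim])
  also have "integral {0..1} (\<lambda>t. if t = 1 then 0 else g t) = integral {0..1} g"
    by (rule integral_spike[where S = "{1}"]) auto
  finally show "(\<lambda>n. integral {0..1} (\<lambda>t. (1 - t) powr (- S n) * g t)) \<longlonglongrightarrow> integral {0..1} g"
    unfolding f_def[abs_def] .
qed simp

lemma one_plus_mult_pos: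
  fixes t x :: real
  assumes "0 \<le> t" "t \<le> 1" "1 + x > 0"
  shows "1 + t * x > 0"
proof (cases "x \<ge> 0")
  case False
  then have "t * x \<ge> 1 * x"
    using assms by (intro mult_right_mono_neg) auto
  then show ?thesis
    using assms(3) by simp
qed (use assms in \<open>auto intro: add_pos_nonneg\<close>)

lemma continuous_on_one_plus_mult_powr:
  fixes x p :: real
  assumes "1 + x > 0"
  shows "continuous_on {0..1} (\<lambda>t. (1 + t * x) powr p)"
proof -
  have "\<forall>t\<in>{0..1}. 1 + t * x \<noteq> 0"
    using one_plus_mult_pos[of _ x] assms by (metis atLeastAtMost_iff less_irrefl)
  then show ?thesis
    by (intro continuous_intros) auto
qed

lemma has_integral_one_plus_mult_powr:
  fixes s x :: real
  assumes "s \<noteq> 0" "x \<noteq> 0" "1 + x > 0"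
  shows "((\<lambda>t. (1 + t * x) powr (s - 1)) has_integral ((1 + x) powr s - 1) / (s * x)) {0..1}"
proof -
  have "((\<lambda>t. (1 + t * x) powr (s - 1)) has_integral
          (1 + 1 * x) powr s / (s * x) - (1 + 0 * x) powr s / (s * x)) {0..1}"
  proof (rule fundamental_theorem_of_calculus)
    fix t :: real assume t: "t \<in> {0..1}"
    have "((\<lambda>t. (1 + t * x) powr s / (s * x)) has_real_derivative
            s * (1 + t * x) powr (s - 1) * x / (s * x)) (at t within {0..1})"
      using one_plus_mult_pos[of t x] t assms(3) by (auto intro!: derivative_eq_intros)
    then show "((\<lambda>t. (1 + t * x) powr s / (s * x)) has_vector_derivative (1 + t * x) powr (s - 1))
                 (at t within {0..1})"
      using assms by (simp add: has_real_derivative_iff_has_vector_derivative)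
  qed simp
  then show ?thesis
    by (simp add: diff_divide_distrib)
qed

definition kernel_integral :: "real \<Rightarrow> real \<Rightarrow> real \<Rightarrow> real" where
  "kernel_integral s x \<beta> = integral {0..1} (\<lambda>t. (1 - t) powr (- \<beta>) * (1 + t * x) powr (s - 1))"

lemma u_beta_eq_kernel_integral:
  "u_beta K \<sigma> \<alpha> C \<beta> q = K * \<sigma> / (\<sigma> - 1) * (1 + \<alpha> * \<sigma> * q) powr (\<beta> - 1 / \<sigma>) * q powr (1 - \<beta>)
     * (1 + (\<beta> - 1 / \<sigma>) * kernel_integral (1 / \<sigma>) (\<alpha> * \<sigma> * q) \<beta>) + C"
  by (simp add: u_beta_def kernel_integral_def mult.assoc)

lemma u_beta_tendsto_at_right_0:
  fixes \<alpha> \<sigma> K C q :: real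
  assumes "\<alpha> \<noteq> 0" "\<sigma> \<noteq> 0" "\<sigma> \<noteq> 1" "q > 0" "1 + \<alpha> * \<sigma> * q > 0"
  shows "((\<lambda>\<beta>. u_beta K \<sigma> \<alpha> C \<beta> q) \<longlongrightarrow>
           K / (\<alpha> * (\<sigma> - 1)) * ((1 + \<alpha> * \<sigma> * q) powr ((\<sigma> - 1) / \<sigma>) - 1) + C) (at_right 0)"
proof -
  define s where "s = 1 / \<sigma>"
  define x where "x = \<alpha> * \<sigma> * q"
  have s: "s \<noteq> 0" and x: "x \<noteq> 0" "1 + x > 0"
    using assms by (auto simp: s_def x_def)
  have I: "((\<lambda>t. (1 + t * x) powr (s - 1)) has_integral ((1 + x) powr s - 1) / (s * x)) {0..1}"
    by (rule has_integral_one_plus_mult_powr[OF s x])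
  from continuous_on_one_plus_mult_powr[OF x(2)]
  have "(kernel_integral s x \<longlongrightarrow> integral {0..1} (\<lambda>t. (1 + t * x) powr (s - 1))) (at_right 0)"
    unfolding kernel_integral_def[abs_def] by (rule tendsto_integral_one_minus_powr_mult_at_right_0)
  then have "(kernel_integral s x \<longlongrightarrow> ((1 + x) powr s - 1) / (s * x)) (at_right 0)"
    by (simp only: integral_unique[OF I])
  then have "((\<lambda>\<beta>. K * \<sigma> / (\<sigma> - 1) * (1 + x) powr (\<beta> - s) * q powr (1 - \<beta>)
                  * (1 + (\<beta> - s) * kernel_integral s x \<beta>) + C) \<longlongrightarrow>
             K * \<sigma> / (\<sigma> - 1) * (1 + x) powr (0 - s) * q powr (1 - 0)
               * (1 + (0 - s) * (((1 + x) powr s - 1) / (s * x))) + C) (at_right 0)"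
    using x assms(4) by (intro tendsto_intros) auto
  also have "K * \<sigma> / (\<sigma> - 1) * (1 + x) powr (0 - s) * q powr (1 - 0)
               * (1 + (0 - s) * (((1 + x) powr s - 1) / (s * x))) + C
           = K / (\<alpha> * (\<sigma> - 1)) * ((1 + x) powr ((\<sigma> - 1) / \<sigma>) - 1) + C"
  proof -
    define V where "V = (1 + x) powr s"
    define W where "W = (1 + x) powr (- s)"
    have VW: "V * W = 1"
      using x by (simp add: V_def W_def powr_add[symmetric])
    have "(1 + x) powr ((\<sigma> - 1) / \<sigma>) = (1 + x) powr (1 + - s)"
      using assms(2) by (simp add: s_def diff_divide_distrib)
    also have "\<dots> = (1 + x) * W"
      using x powr_add[of "1 + x" 1 "- s"] by (simp add: W_def)
    finally have "(1 + x) powr ((\<sigma> - 1) / \<sigma>) = (1 + x) * W" .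
    moreover have "K * \<sigma> / (\<sigma> - 1) * W * q * (1 - s * ((V - 1) / (s * x)))
                     = K * \<sigma> * q / ((\<sigma> - 1) * x) * ((1 + x) * W - V * W)"
      using s x assms(3) by (simp add: field_simps)
    moreover have "K * \<sigma> * q / ((\<sigma> - 1) * x) = K / (\<alpha> * (\<sigma> - 1))"
      using assms by (simp add: x_def)
    ultimately show ?thesis
      using assms(4) by (simp add: V_def[symmetric] W_def[symmetric] VW)
  qed
  finally show ?thesis
    unfolding u_beta_eq_kernel_integral s_def x_def .
qed

definition incomplete_Beta :: "real \<Rightarrow> real \<Rightarrow> real \<Rightarrow> real" where
  "incomplete_Beta y a b = integral {0..y} (\<lambda>v. v powr (a - 1) * (1 - v) powr (b - 1))"

lemma incomplete_Beta_add_tail: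
  fixes a b y :: real
  assumes "a > 0" "b > 0" "0 \<le> y" "y \<le> 1"
  shows "incomplete_Beta y a b + integral {y..1} (\<lambda>v. v powr (a - 1) * (1 - v) powr (b - 1))
           = Beta a b"
  using Henstock_Kurzweil_Integration.integral_combine[OF assms(3,4) integrable_Beta'[OF assms(1,2)]]
    integral_unique[OF has_integral_Beta_real[OF assms(1,2)]]
  unfolding incomplete_Beta_def by simp

lemma incomplete_Beta_recurrence:
  fixes a b y :: real
  assumes a: "a > 0" and b: "b > -1" and y: "0 < y" "y < 1"
  shows "b * incomplete_Beta y a b
           = (a + b) * incomplete_Beta y a (b + 1) - y powr a * (1 - y) powr b"
proof -
  define F where "F v = v powr a * (1 - v) powr b" for v
  define g where "g v = v powr (a - 1) * (1 - v) powr (b - 1)" for v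
  define h where "h v = v powr (a - 1) * (1 - v) powr b" for v
  have h_int: "h integrable_on {0..y}"
  proof (rule integrable_subinterval_real)
    show "h integrable_on {0..1}"
      using integrable_Beta'[of a "b + 1"] a b by (simp add: h_def[abs_def])
  qed (use y in auto)
  have "((\<lambda>v. (a + b) * h v - b * g v) has_integral F y - F 0) {0..y}"
  proof (rule fundamental_theorem_of_calculus_interior)
    show "continuous_on {0..y} F"
      unfolding F_def using a y by (intro continuous_intros continuous_on_powr') auto
    fix v assume "v \<in> {0<..<y}"
    then have v: "0 < v" "v < 1" using y by auto
    have "(F has_real_derivative
             a * v powr (a - 1) * (1 - v) powr b + v powr a * (b * (1 - v) powr (b - 1) * - 1)) (at v)"
      unfolding F_def using v by (auto intro!: derivative_eq_intros)
    moreover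
    have pa: "v powr a = v * v powr (a - 1)" and pb: "(1 - v) powr b = (1 - v) * (1 - v) powr (b - 1)"
      using v powr_add[of v 1 "a - 1"] powr_add[of "1 - v" 1 "b - 1"] by simp_all
    have "a * v powr (a - 1) * (1 - v) powr b + v powr a * (b * (1 - v) powr (b - 1) * - 1)
            = (a + b) * h v - b * g v"
      unfolding h_def g_def pa pb by (simp add: algebra_simps)
    ultimately show "(F has_vector_derivative (a + b) * h v - b * g v) (at v)"
      by (simp add: has_real_derivative_iff_has_vector_derivative)
  qed (use y in simp)
  from has_integral_diff[OF has_integral_mult_right[OF integrable_integral[OF h_int], where c = "a + b"] this]
  have "((\<lambda>v. b * g v) has_integral (a + b) * integral {0..y} h - F y) {0..y}"
    using a by (simp add: F_def)
  then have "b * integral {0..y} g = (a + b) * integral {0..y} h - F y"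
    by (simp add: integral_unique flip: integral_mult_right)
  then show ?thesis
    unfolding incomplete_Beta_def g_def[abs_def] h_def[abs_def] F_def by simp
qed

lemma has_integral_comp_one_minus_div:
  fixes f :: "real \<Rightarrow> real" and y :: real
  assumes f: "(f has_integral I) {0..1}" and y: "y > 0"
  shows "((\<lambda>v. f (1 - v / y)) has_integral y * I) {0..y}"
proof -
  from has_integral_affinity[OF f[folded cbox_interval], of "- 1 / y" 1]
  have "((\<lambda>v. f ((- 1 / y) * v + 1)) has_integral y * I)
          ((\<lambda>v. (1 / (- 1 / y)) *\<^sub>R v + - ((1 / (- 1 / y)) *\<^sub>R 1)) ` cbox 0 1)"
    using y by simp
  moreover have "(\<lambda>v. (1 / (- 1 / y)) *\<^sub>R v + - ((1 / (- 1 / y)) *\<^sub>R 1)) = (\<lambda>v. (- y) * v + y)"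
    using y by (simp add: fun_eq_iff)
  then have "(\<lambda>v. (1 / (- 1 / y)) *\<^sub>R v + - ((1 / (- 1 / y)) *\<^sub>R 1)) ` cbox 0 1 = {0..y}"
    using y by (simp only: image_affinity_atLeastAtMost cbox_interval) simp
  ultimately show ?thesis
    by simp
qed

lemma incomplete_Beta_eq_kernel_integral:
  fixes s x \<beta> :: real
  assumes x: "x > 0" and \<beta>: "\<beta> < 1"
  defines "y \<equiv> x / (1 + x)"
  shows "incomplete_Beta y (1 - \<beta>) s = y powr (1 - \<beta>) * (1 + x) powr (1 - s) * kernel_integral s x \<beta>"
proof -
  define k where "k t = (1 - t) powr (- \<beta>) * (1 + t * x) powr (s - 1)" for t
  define c where "c = y powr \<beta> * (1 + x) powr (s - 1)"
  have y: "0 < y" "y < 1"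
    using x by (auto simp: y_def)
  have c: "c > 0"
    using x y by (simp add: c_def)
  have "(k has_integral kernel_integral s x \<beta>) {0..1}"
    unfolding kernel_integral_def k_def[abs_def] using x \<beta>
    by (intro integrable_integral integrable_one_minus_powr_mult continuous_on_one_plus_mult_powr) auto
  from has_integral_comp_one_minus_div[OF this y(1)]
  have aff: "((\<lambda>v. k (1 - v / y)) has_integral y * kernel_integral s x \<beta>) {0..y}" .
  have "k (1 - v / y) = c * (v powr (- \<beta>) * (1 - v) powr (s - 1))" if "v \<in> {0..y}" for v
  proof -
    have v: "0 \<le> v" "v < 1"
      using that y by auto
    have "1 + (1 - v / y) * x = (1 + x) * (1 - v)"
      using x by (simp add: y_def field_simps)
    moreover have "1 - (1 - v / y) = v / y"
      by simp
    ultimately have "k (1 - v / y) = (v / y) powr (- \<beta>) * ((1 + x) * (1 - v)) powr (s - 1)"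
      by (simp add: k_def)
    also have "\<dots> = v powr (- \<beta>) / y powr (- \<beta>) * ((1 + x) powr (s - 1) * (1 - v) powr (s - 1))"
      using v y x by (simp add: powr_divide powr_mult)
    finally show ?thesis
      using y by (simp add: c_def powr_minus_divide)
  qed
  from has_integral_eq[OF this aff]
  have "((\<lambda>v. c * (v powr (- \<beta>) * (1 - v) powr (s - 1))) has_integral
                     y * kernel_integral s x \<beta>) {0..y}" .
  then have "((\<lambda>v. v powr (- \<beta>) * (1 - v) powr (s - 1)) has_integral
                y * kernel_integral s x \<beta> / c) {0..y}"
    using c by (simp add: has_integral_mult_right_iff)
  moreover have "y * kernel_integral s x \<beta> / c = y powr (1 - \<beta>) * (1 + x) powr (1 - s) * kernel_integral s x \<beta>"
    using x y by (simp add: c_def powr_diff)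
  ultimately show ?thesis
    unfolding incomplete_Beta_def by (simp add: integral_unique)
qed

lemma Gamma_mult_rGamma_eq_Beta:
  fixes a b :: real
  assumes "b \<notin> \<int>\<^sub>\<le>\<^sub>0"
  shows "b * (Gamma a * Gamma b * rGamma (a + b - 1)) = (a + b - 1) * (a + b) * Beta a (b + 1)"
proof -
  have r1: "rGamma (a + b - 1) = (a + b - 1) * rGamma (a + b)"
    using rGamma_plus1[of "a + b - 1"] by simp
  have r2: "rGamma (a + b) = (a + b) * rGamma (a + (b + 1))"
    using rGamma_plus1[of "a + b"] by (simp add: add.assoc)
  have "Beta a (b + 1) = Gamma a * (b * Gamma b) * rGamma (a + (b + 1))"
    unfolding Beta_altdef Gamma_plus1[OF assms] ..
  then show ?thesis
    unfolding r1 r2 by (simp only: mult_ac)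
qed

lemma u_beta_prefactor_eq:
  fixes c q s \<beta> :: real
  assumes c: "c > 0" and q: "q > 0"
  defines "x \<equiv> c * q"
  defines "y \<equiv> x / (1 + x)"
  shows "(1 + x) powr (\<beta> - s) * q powr (1 - \<beta>) = c powr (\<beta> - 1) * (y powr (1 - \<beta>) * (1 + x) powr (1 - s))"
proof -
  have x: "x > 0"
    using c q by (simp add: x_def)
  have "y powr (1 - \<beta>) = c powr (1 - \<beta>) * q powr (1 - \<beta>) / (1 + x) powr (1 - \<beta>)"
    using x c q by (simp add: y_def x_def powr_divide powr_mult)
  then have "c powr (\<beta> - 1) * (y powr (1 - \<beta>) * (1 + x) powr (1 - s))
               = (c powr (\<beta> - 1) * c powr (1 - \<beta>)) * q powr (1 - \<beta>)
                 * ((1 + x) powr (1 - s) / (1 + x) powr (1 - \<beta>))"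
    by (simp only: times_divide_eq_left times_divide_eq_right mult_ac)
  also have "c powr (\<beta> - 1) * c powr (1 - \<beta>) = 1"
    using c by (simp flip: powr_add)
  also have "(1 + x) powr (1 - s) / (1 + x) powr (1 - \<beta>) = (1 + x) powr (\<beta> - s)"
    by (simp add: algebra_simps flip: powr_diff)
  finally show ?thesis
    by (simp add: mult.commute)
qed

lemma u_beta_add_D_beta_eq:
  fixes \<alpha> \<sigma> K C q \<beta> :: real
  assumes \<sigma>: "\<sigma> \<noteq> 0" "1 + 1 / \<sigma> > 0" and \<alpha>\<sigma>: "\<alpha> * \<sigma> > 0" and q: "q > 0"
    and \<beta>: "0 < \<beta>" "\<beta> < 1"
  defines "s \<equiv> 1 / \<sigma>" and "x \<equiv> \<alpha> * \<sigma> * q"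
  defines "y \<equiv> x / (1 + x)"
  shows "u_beta K \<sigma> \<alpha> C \<beta> q + D_beta K \<sigma> \<alpha> \<beta> = C + K * \<sigma> / (\<sigma> - 1) *
           ((1 + x) powr (\<beta> - s) * q powr (1 - \<beta>) + (\<alpha> * \<sigma>) powr (\<beta> - 1) * (s - \<beta>) / s *
             ((s + 1 - \<beta>) * integral {y..1} (\<lambda>v. v powr (- \<beta>) * (1 - v) powr s)
              + y powr (1 - \<beta>) * (1 - y) powr s))"
proof -
  define P where "P = K * \<sigma> / (\<sigma> - 1)"
  define A where "A = (1 + x) powr (\<beta> - s) * q powr (1 - \<beta>)"
  define E where "E = (\<alpha> * \<sigma>) powr (\<beta> - 1)"
  define Z where "Z = y powr (1 - \<beta>) * (1 + x) powr (1 - s)"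
  define I where "I = kernel_integral s x \<beta>"
  define L where "L = incomplete_Beta y (1 - \<beta>) s"
  define H where "H = incomplete_Beta y (1 - \<beta>) (s + 1)"
  define T where "T = integral {y..1} (\<lambda>v. v powr (- \<beta>) * (1 - v) powr s)"
  define Y where "Y = y powr (1 - \<beta>) * (1 - y) powr s"
  define G where "G = Gamma (1 - \<beta>) * Gamma s * rGamma (s - \<beta>)"
  define B where "B = Beta (1 - \<beta>) (s + 1)"
  have s: "s > -1" "s \<noteq> 0"
    using \<sigma> by (auto simp: s_def)
  have x: "x > 0"
    using \<alpha>\<sigma> q by (simp add: x_def)
  then have y: "0 < y" "y < 1"
    by (auto simp: y_def)
  have Z: "Z > 0"
    using x y by (simp add: Z_def)
  have A: "A = E * Z"
    using u_beta_prefactor_eq[OF \<alpha>\<sigma> q, of \<beta> s, folded x_def y_def] by (simp add: A_def E_def Z_def)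
  have "L = Z * I"
    using incomplete_Beta_eq_kernel_integral[OF x \<beta>(2), of s, folded y_def]
    by (simp add: L_def Z_def I_def)
  then have I: "I = L / Z"
    using Z by simp
  have L: "L = ((s + 1 - \<beta>) * H - Y) / s"
    using incomplete_Beta_recurrence[of "1 - \<beta>" s y] \<beta> s y
    by (simp add: L_def H_def Y_def field_simps)
  have H: "H = B - T"
    using incomplete_Beta_add_tail[of "1 - \<beta>" "s + 1" y] \<beta> s y by (simp add: H_def T_def B_def)
  have "s \<notin> \<int>\<^sub>\<le>\<^sub>0"
    using s by (auto elim!: nonpos_Ints_cases)
  then have G: "G = (s - \<beta>) * (s + 1 - \<beta>) * B / s"
    using Gamma_mult_rGamma_eq_Beta[of s "1 - \<beta>"] s by (simp add: G_def B_def field_simps)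
  have u: "u_beta K \<sigma> \<alpha> C \<beta> q = P * A * (1 + (\<beta> - s) * I) + C"
    using u_beta_eq_kernel_integral[of K \<sigma> \<alpha> C \<beta> q, folded s_def x_def]
    by (simp add: P_def A_def I_def)
  have D: "D_beta K \<sigma> \<alpha> \<beta> = P * G * E"
    unfolding D_beta_def s_def[symmetric] by (simp add: P_def G_def E_def)
  \<comment> \<open>the complete Beta integral B enters through L (via H) and through G, and cancels\<close>
  have "P * A * (1 + (\<beta> - s) * I) + C + P * G * E = C + P * (A + E * (s - \<beta>) / s * ((s + 1 - \<beta>) * T + Y))"
    unfolding A I L H G using Z s by (simp add: field_simps)
  then show ?thesis
    unfolding u D by (simp add: P_def A_def E_def T_def Y_def)
qed

lemma tendsto_tail_integral_at_left_1:
  fixes s y :: real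
  assumes s: "s > -1" and y: "0 < y" "y \<le> 1"
  shows "((\<lambda>\<beta>. integral {y..1} (\<lambda>v. v powr (- \<beta>) * (1 - v) powr s)) \<longlongrightarrow>
           integral {y..1} (\<lambda>v. (1 - v) powr s / v)) (at_left 1)"
proof (rule tendsto_at_left_sequentially[where b = 0])
  fix S :: "nat \<Rightarrow> real"
  assume S: "\<And>n. S n < 1" "\<And>n. 0 < S n" "S \<longlonglongrightarrow> 1"
  define f where "f n v = v powr (- S n) * (1 - v) powr s" for n v
  define h where "h v = (1 - v) powr s * (1 / y)" for v
  have f_int: "f n integrable_on {y..1}" for n
  proof (rule integrable_subinterval_real)
    show "f n integrable_on {0..1}"
      using integrable_Beta'[of "1 - S n" "s + 1"] S(1,2)[of n] s by (simp add: f_def[abs_def])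
  qed (use y in auto)
  have h_int: "h integrable_on {y..1}"
    unfolding h_def using y
    by (intro integrable_on_mult_left integrable_subinterval_real[OF integrable_one_minus_powr[OF s]])
      auto
  have f_le_h: "norm (f n v) \<le> h v" if "v \<in> {y..1}" for n v
  proof -
    have v: "y \<le> v" "v \<le> 1" "0 < v"
      using that y by auto
    have "v powr (- S n) \<le> v powr (- 1)"
      using v S(1)[of n] by (intro powr_mono') auto
    also have "\<dots> = 1 / v"
      using v by (simp add: powr_minus_divide)
    also have "\<dots> \<le> 1 / y"
      using v y by (intro divide_left_mono) auto
    finally have "v powr (- S n) * (1 - v) powr s \<le> 1 / y * (1 - v) powr s"
      by (rule mult_right_mono) simp
    then show ?thesis
      unfolding f_def h_def norm_mult by simp
  qed
  have f_lim: "(\<lambda>n. f n v) \<longlonglongrightarrow> (1 - v) powr s / v" if "v \<in> {y..1}" for v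
  proof -
    have "(\<lambda>n. f n v) \<longlonglongrightarrow> v powr (- 1) * (1 - v) powr s"
      unfolding f_def using that y by (intro tendsto_intros S(3)) auto
    then show ?thesis
      using that y by (simp add: powr_minus_divide)
  qed
  show "(\<lambda>n. integral {y..1} (\<lambda>v. v powr (- S n) * (1 - v) powr s)) \<longlonglongrightarrow>
          integral {y..1} (\<lambda>v. (1 - v) powr s / v)"
    using dominated_convergence(2)[OF f_int h_int f_le_h f_lim] unfolding f_def[abs_def] .
qed simp

lemma has_integral_comp_mult_minus:
  fixes f :: "real \<Rightarrow> real" and x :: real
  assumes f: "(f has_integral I) {0..1}" and x: "x > 0"
  shows "((\<lambda>v. f ((1 + x) * v - x)) has_integral I / (1 + x)) {x / (1 + x)..1}"
proof -
  from has_integral_affinity[OF f[folded cbox_interval], of "1 + x" "- x"] x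
  have "((\<lambda>v. f ((1 + x) * v - x)) has_integral I / (1 + x))
          ((\<lambda>v. (1 / (1 + x)) *\<^sub>R v + - ((1 / (1 + x)) *\<^sub>R - x)) ` cbox 0 1)"
    by (simp add: divide_inverse_commute)
  moreover have "(\<lambda>v. (1 / (1 + x)) *\<^sub>R v + - ((1 / (1 + x)) *\<^sub>R - x)) = (\<lambda>v. (1 / (1 + x)) * v + x / (1 + x))"
    by (simp add: fun_eq_iff)
  then have "(\<lambda>v. (1 / (1 + x)) *\<^sub>R v + - ((1 / (1 + x)) *\<^sub>R - x)) ` cbox 0 1 = {x / (1 + x)..1}"
    using x by (simp only: image_affinity_atLeastAtMost cbox_interval) (simp add: field_simps)
  ultimately show ?thesis
    by simp
qed

lemma tail_integral_eq_integral_div: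
  fixes s x :: real
  assumes s: "s > -1" and x: "x > 0"
  shows "integral {x / (1 + x)..1} (\<lambda>v. (1 - v) powr s / v)
           = (1 + x) powr (- s) * integral {0..1} (\<lambda>t. (1 - t) powr s / (x + t))"
proof -
  define f where "f = (\<lambda>t. (1 - t) powr s / (x + t))"
  define c where "c = (1 + x) powr (s - 1)"
  have c: "c > 0"
    using x by (simp add: c_def)
  have "(\<lambda>t. (1 - t) powr s * (1 / (x + t))) integrable_on {0..1}"
    using x by (intro integrable_one_minus_powr_mult[OF s] continuous_intros) auto
  then have "(f has_integral integral {0..1} f) {0..1}"
    by (simp add: f_def integrable_integral)
  from has_integral_comp_mult_minus[OF this x]
  have aff: "((\<lambda>v. f ((1 + x) * v - x)) has_integral integral {0..1} f / (1 + x)) {x / (1 + x)..1}" .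
  have "f ((1 + x) * v - x) = c * ((1 - v) powr s / v)" if "v \<in> {x / (1 + x)..1}" for v
  proof -
    have v: "0 < v" "v \<le> 1"
      using that x by (auto simp: field_simps intro: less_le_trans[of 0 "x / (1 + x)"])
    have "1 - ((1 + x) * v - x) = (1 + x) * (1 - v)"
      by (simp add: algebra_simps)
    then have "f ((1 + x) * v - x) = ((1 + x) * (1 - v)) powr s / ((1 + x) * v)"
      by (simp add: f_def)
    also have "\<dots> = (1 + x) powr s * (1 - v) powr s / ((1 + x) * v)"
      using x v by (simp add: powr_mult)
    also have "(1 + x) powr s = (1 + x) * c"
      using powr_add[of "1 + x" 1 "s - 1"] x by (simp add: c_def)
    finally show ?thesis
      using x v by simp
  qed
  from has_integral_eq[OF this aff]
  have "((\<lambda>v. c * ((1 - v) powr s / v)) has_integral integral {0..1} f / (1 + x)) {x / (1 + x)..1}" .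
  from has_integral_mult_right_iff[THEN iffD1, OF _ this] c
  have "((\<lambda>v. (1 - v) powr s / v) has_integral integral {0..1} f / (1 + x) / c) {x / (1 + x)..1}"
    by simp
  moreover have "integral {0..1} f / (1 + x) / c = (1 + x) powr (- s) * integral {0..1} f"
    using powr_add[of "1 + x" 1 "s - 1"] x by (simp add: c_def powr_minus_divide)
  ultimately show ?thesis
    by (simp add: f_def integral_unique)
qed

lemma Beta_of_nat_plus_1:
  fixes b :: real
  assumes "b \<notin> \<int>\<^sub>\<le>\<^sub>0"
  shows "Beta (real n + 1) b = fact n / pochhammer b (Suc n)"
proof -
  have "pochhammer b (Suc n) \<noteq> 0"
    using assms pochhammer_eq_0_imp_nonpos_Int by blast
  then have "rGamma (real n + 1 + b) = rGamma b / pochhammer b (Suc n)"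
    using pochhammer_rGamma[of b "Suc n"] by (simp add: field_simps)
  then have "Beta (real n + 1) b = Gamma (real n + 1) * (Gamma b * rGamma b) / pochhammer b (Suc n)"
    by (simp add: Beta_altdef mult.assoc)
  moreover have "Gamma b * rGamma b = 1"
    using assms by (simp add: rGamma_inverse_Gamma Gamma_eq_zero_iff)
  moreover have "Gamma (real n + 1) = fact n"
    using Gamma_fact[of n, where 'a = real] by (simp add: add.commute)
  ultimately show ?thesis
    by simp
qed

lemma has_integral_power_mult_one_minus_powr:
  fixes s :: real
  assumes "s > -1"
  shows "((\<lambda>t. t ^ n * (1 - t) powr s) has_integral fact n / pochhammer (s + 1) (Suc n)) {0..1}"
proof -
  have "((\<lambda>t. t powr (real n + 1 - 1) * (1 - t) powr (s + 1 - 1)) has_integral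
          Beta (real n + 1) (s + 1)) {0..1}"
    using assms by (intro has_integral_Beta_real) auto
  then have "((\<lambda>t. t ^ n * (1 - t) powr s) has_integral Beta (real n + 1) (s + 1)) {0..1}"
    by (rule has_integral_spike_finite[of "{0}", rotated 2]) (auto simp: powr_realpow)
  moreover have "Beta (real n + 1) (s + 1) = fact n / pochhammer (s + 1) (Suc n)"
    using assms by (intro Beta_of_nat_plus_1) (auto elim!: nonpos_Ints_cases)
  ultimately show ?thesis
    by simp
qed

lemma abs_sum_power_le:
  fixes r c :: real
  assumes "\<bar>r\<bar> \<le> c" "c < 1"
  shows "\<bar>\<Sum>n<N. r ^ n\<bar> \<le> 1 / (1 - c)"
proof -
  have "0 \<le> c"
    using assms(1) by linarith
  have "\<bar>\<Sum>n<N. r ^ n\<bar> \<le> (\<Sum>n<N. c ^ n)"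
    using assms by (intro order.trans[OF sum_abs] sum_mono) (auto simp: power_abs intro: power_mono)
  also have "\<dots> = (1 - c ^ N) / (1 - c)"
    using assms by (simp add: sum_gp_strict)
  also have "\<dots> \<le> 1 / (1 - c)"
    using assms \<open>0 \<le> c\<close> by (intro divide_right_mono) auto
  finally show ?thesis .
qed

lemma sums_integral_one_minus_powr_div:
  fixes s x :: real
  assumes s: "s > -1" and x: "x > 1"
  shows "(\<lambda>n. fact n / pochhammer (s + 1) (Suc n) * ((- 1 / x) ^ n / x))
           sums integral {0..1} (\<lambda>t. (1 - t) powr s / (x + t))"
proof -
  define f where "f N t = (\<Sum>n<N. t ^ n * (1 - t) powr s * ((- 1 / x) ^ n / x))" for N t
  define h where "h t = (1 - t) powr s * (1 / (x - 1))" for t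
  have f_eq: "f N t = (1 - t) powr s / x * (\<Sum>n<N. (- t / x) ^ n)" for N t
    unfolding f_def sum_distrib_left
    by (intro sum.cong refl) (simp add: power_mult_distrib[symmetric] field_simps)
  have f_has_int: "(f N has_integral
                      (\<Sum>n<N. fact n / pochhammer (s + 1) (Suc n) * ((- 1 / x) ^ n / x))) {0..1}" for N
    unfolding f_def[abs_def]
    by (intro has_integral_sum has_integral_mult_left has_integral_power_mult_one_minus_powr s) auto
  have h_int: "h integrable_on {0..1}"
    unfolding h_def by (intro integrable_on_mult_left integrable_one_minus_powr s)
  have f_le_h: "norm (f N t) \<le> h t" if "t \<in> {0..1}" for N t
  proof -
    have "norm (f N t) = (1 - t) powr s / x * \<bar>\<Sum>n<N. (- t / x) ^ n\<bar>"
      using x by (simp add: f_eq abs_mult)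
    also have "\<dots> \<le> (1 - t) powr s / x * (1 / (1 - 1 / x))"
      using that x by (intro mult_left_mono abs_sum_power_le) (auto intro: divide_right_mono)
    also have "\<dots> = h t"
      using x by (simp add: h_def field_simps)
    finally show ?thesis .
  qed
  have f_lim: "(\<lambda>N. f N t) \<longlonglongrightarrow> (1 - t) powr s / (x + t)" if "t \<in> {0..1}" for t
  proof -
    have "(\<lambda>n. (- t / x) ^ n) sums (1 / (1 - (- t / x)))"
      using that x by (intro geometric_sums) auto
    then have "(\<lambda>N. f N t) \<longlonglongrightarrow> (1 - t) powr s / x * (1 / (1 - (- t / x)))"
      unfolding f_eq sums_def by (intro tendsto_intros)
    moreover have "1 - (- t / x) = (x + t) / x"
      using x by (simp add: field_simps)
    then have "(1 - t) powr s / x * (1 / (1 - (- t / x))) = (1 - t) powr s / (x + t)"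
      using x by simp
    ultimately show ?thesis
      by (simp only:)
  qed
  have "(\<lambda>N. integral {0..1} (f N)) \<longlonglongrightarrow> integral {0..1} (\<lambda>t. (1 - t) powr s / (x + t))"
    using dominated_convergence(2)[OF _ h_int f_le_h f_lim] f_has_int by blast
  then show ?thesis
    unfolding sums_def integral_unique[OF f_has_int] .
qed

lemma summable_fact_div_pochhammer:
  fixes s z :: real
  assumes s: "s > -1" and z: "\<bar>z\<bar> < 1"
  shows "summable (\<lambda>n. fact n / pochhammer (1 + s) n * z ^ n)"
proof -
  define c where "c n = fact n / pochhammer (1 + s) n" for n
  define \<rho> where "\<rho> = (1 + \<bar>z\<bar>) / 2"
  have c_pos: "c n > 0" for n
    using s by (auto simp: c_def intro!: divide_pos_pos pochhammer_pos)
  have c_Suc: "c (Suc n) = c n / (1 + s / real (Suc n))" for n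
  proof -
    have "pochhammer (1 + s) n > 0" "1 + s + real n > 0"
      using s by (auto intro!: pochhammer_pos)
    then show ?thesis
      by (simp add: c_def pochhammer_Suc field_simps)
  qed
  have "(\<lambda>n. s / real (Suc n)) \<longlonglongrightarrow> 0"
    by (rule LIMSEQ_Suc[OF lim_const_over_n])
  then have "(\<lambda>n. \<bar>z\<bar> / (1 + s / real (Suc n))) \<longlonglongrightarrow> \<bar>z\<bar> / (1 + 0)"
    by (intro tendsto_intros) auto
  then have "(\<lambda>n. \<bar>z\<bar> / (1 + s / real (Suc n))) \<longlonglongrightarrow> \<bar>z\<bar>"
    by simp
  moreover have "\<bar>z\<bar> < \<rho>"
    using z by (simp add: \<rho>_def)
  ultimately have "eventually (\<lambda>n. \<bar>z\<bar> / (1 + s / real (Suc n)) < \<rho>) sequentially"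
    by (rule order_tendstoD(2))
  then obtain N where N: "\<And>n. n \<ge> N \<Longrightarrow> \<bar>z\<bar> / (1 + s / real (Suc n)) < \<rho>"
    unfolding eventually_sequentially by blast
  have "summable (\<lambda>n. c n * z ^ n)"
  proof (rule summable_ratio_test[of \<rho> N])
    show "\<rho> < 1"
      using z by (simp add: \<rho>_def)
    fix n assume "n \<ge> N"
    have "s / real (Suc n) > -1"
      using s by (simp add: field_simps; linarith)
    then have D: "1 + s / real (Suc n) > 0"
      by simp
    have "norm (c (Suc n) * z ^ Suc n) = c (Suc n) * \<bar>z\<bar> ^ Suc n"
      using c_pos[of "Suc n"] by (simp add: abs_mult power_abs)
    also have "\<dots> = \<bar>z\<bar> / (1 + s / real (Suc n)) * (c n * \<bar>z\<bar> ^ n)"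
      using D by (simp add: c_Suc field_simps)
    also have "\<dots> \<le> \<rho> * (c n * \<bar>z\<bar> ^ n)"
      using N[OF \<open>n \<ge> N\<close>] c_pos[of n] by (intro mult_right_mono) auto
    also have "\<dots> = \<rho> * norm (c n * z ^ n)"
      using c_pos[of n] by (simp add: abs_mult power_abs)
    finally show "norm (c (Suc n) * z ^ Suc n) \<le> \<rho> * norm (c n * z ^ n)" .
  qed
  then show ?thesis
    by (simp add: c_def)
qed

lemma hyp2F1_1_1_eq_integral:
  fixes s x :: real
  assumes s: "s > -1" and x: "x > 1"
  shows "(1 + 1 / x) * hyp2F1 1 1 (1 + s) (- 1 / x)
           = 1 + s * integral {0..1} (\<lambda>t. (1 - t) powr s / (x + t))"
proof -
  define z where "z = - 1 / x"
  define c where "c n = fact n / pochhammer (1 + s) n" for n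
  define m where "m n = fact n / pochhammer (s + 1) (Suc n)" for n
  define F where "F = (\<Sum>n. c n * z ^ n)"
  define J where "J = integral {0..1} (\<lambda>t. (1 - t) powr s / (x + t))"
  have "\<bar>z\<bar> < 1"
    using x by (simp add: z_def)
  then have F: "(\<lambda>n. c n * z ^ n) sums F"
    using summable_fact_div_pochhammer[OF s] by (simp add: F_def c_def summable_sums)
  have hyp: "hyp2F1 1 1 (1 + s) z = F"
    unfolding hyp2F1_def F_def c_def by (intro suminf_cong) (simp add: pochhammer_fact[symmetric])
  \<comment> \<open>the Taylor coefficients of the hypergeometric series telescope into the Beta moments m n\<close>
  have c_Suc: "c (Suc n) - c n = - s * m n" for n
  proof -
    define D where "D = 1 + s + real n"
    have P: "pochhammer (1 + s) n > 0" and D: "D > 0"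
      using s by (auto simp: D_def intro!: pochhammer_pos)
    have "pochhammer (s + 1) (Suc n) = pochhammer (1 + s) n * D"
      by (simp add: D_def pochhammer_Suc add.commute)
    then have m: "m n = c n / D" and c: "c (Suc n) = c n * (real n + 1) / D"
      using P D by (simp_all add: m_def c_def pochhammer_Suc D_def field_simps)
    show ?thesis
      unfolding m c using D by (simp add: field_simps D_def)
  qed
  have "(\<lambda>n. c (Suc n) * z ^ Suc n) sums (F - 1)"
    using F by (subst sums_Suc_iff) (simp add: c_def)
  from sums_diff[OF this sums_mult[OF F, of z]]
  have "(\<lambda>n. c (Suc n) * z ^ Suc n - z * (c n * z ^ n)) sums (F - 1 - z * F)" .
  moreover have "(\<lambda>n. c (Suc n) * z ^ Suc n - z * (c n * z ^ n)) sums (s * J)"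
  proof -
    have "(\<lambda>n. m n * (z ^ n * (- z))) sums J"
      using sums_integral_one_minus_powr_div[OF s x] by (simp add: J_def m_def z_def)
    from sums_mult[OF this, of s]
    have "(\<lambda>n. s * (m n * (z ^ n * (- z)))) sums (s * J)" .
    moreover have "c (Suc n) * z ^ Suc n - z * (c n * z ^ n) = s * (m n * (z ^ n * (- z)))" for n
    proof -
      have "c (Suc n) * z ^ Suc n - z * (c n * z ^ n) = (c (Suc n) - c n) * (z * z ^ n)"
        by (simp add: algebra_simps)
      then show ?thesis
        by (simp add: c_Suc)
    qed
    ultimately show ?thesis
      by simp
  qed
  ultimately have "F - 1 - z * F = s * J"
    by (rule sums_unique2)
  then show ?thesis
    using hyp by (simp add: z_def J_def algebra_simps)
qed

lemma tail_integral_eq_hyp2F1: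
  fixes s x :: real
  assumes s: "s > -1" and x: "x > 1"
  shows "s * integral {x / (1 + x)..1} (\<lambda>v. (1 - v) powr s / v) + (1 - x / (1 + x)) powr s
           = (1 + x) powr (- s) * (1 + 1 / x) * hyp2F1 1 1 (1 + s) (- 1 / x)"
proof -
  define J where "J = integral {0..1} (\<lambda>t. (1 - t) powr s / (x + t))"
  have "1 - x / (1 + x) = 1 / (1 + x)"
    using x by (simp add: field_simps)
  then have "(1 - x / (1 + x)) powr s = (1 + x) powr (- s)"
    using x by (simp add: powr_divide powr_minus_divide)
  then have "s * integral {x / (1 + x)..1} (\<lambda>v. (1 - v) powr s / v) + (1 - x / (1 + x)) powr s
               = (1 + x) powr (- s) * (1 + s * J)"
    using tail_integral_eq_integral_div[OF s, of x] x by (simp add: J_def algebra_simps)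
  moreover have "1 + s * J = (1 + 1 / x) * hyp2F1 1 1 (1 + s) (- 1 / x)"
    using hyp2F1_1_1_eq_integral[OF s x] by (simp add: J_def)
  ultimately show ?thesis
    by (simp only: mult.assoc)
qed

lemma u_beta_add_D_beta_tendsto_at_left_1:
  fixes \<alpha> \<sigma> K C q :: real
  assumes \<sigma>: "\<sigma> \<noteq> 0" "\<sigma> \<noteq> 1" "1 + 1 / \<sigma> > 0" and \<alpha>\<sigma>: "\<alpha> * \<sigma> > 0"
    and q: "q > 1 / (\<alpha> * \<sigma>)"
  shows "((\<lambda>\<beta>. u_beta K \<sigma> \<alpha> C \<beta> q + D_beta K \<sigma> \<alpha> \<beta>) \<longlongrightarrow>
           K * \<sigma> / (\<sigma> - 1) * ((1 + \<alpha> * \<sigma> * q) powr (1 - 1 / \<sigma>) / q)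
             * (q - (\<sigma> - 1) / (\<alpha> * \<sigma>) * hyp2F1 1 1 (1 + 1 / \<sigma>) (- 1 / (\<alpha> * \<sigma> * q))) + C)
         (at_left 1)"
proof -
  define s where "s = 1 / \<sigma>"
  define x where "x = \<alpha> * \<sigma> * q"
  define y where "y = x / (1 + x)"
  define P where "P = K * \<sigma> / (\<sigma> - 1)"
  define T where "T \<beta> = integral {y..1} (\<lambda>v. v powr (- \<beta>) * (1 - v) powr s)" for \<beta>
  define T1 where "T1 = integral {y..1} (\<lambda>v. (1 - v) powr s / v)"
  define R where "R \<beta> = C + P * ((1 + x) powr (\<beta> - s) * q powr (1 - \<beta>) + (\<alpha> * \<sigma>) powr (\<beta> - 1)
                     * (s - \<beta>) / s * ((s + 1 - \<beta>) * T \<beta> + y powr (1 - \<beta>) * (1 - y) powr s))" for \<beta>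
  have q0: "q > 0"
    using \<alpha>\<sigma> q by (meson less_trans zero_less_divide_1_iff)
  have x: "x > 1"
    using \<alpha>\<sigma> q by (simp add: x_def pos_divide_less_eq mult.commute)
  have s: "s > -1" "s \<noteq> 0"
    using \<sigma> by (auto simp: s_def)
  have y: "0 < y" "y < 1"
    using x by (auto simp: y_def)
  have ev: "eventually (\<lambda>\<beta>. R \<beta> = u_beta K \<sigma> \<alpha> C \<beta> q + D_beta K \<sigma> \<alpha> \<beta>) (at_left 1)"
    using eventually_at_left_real[of 0 1]
  proof (rule eventually_mono)
    fix \<beta> :: real assume "\<beta> \<in> {0<..<1}"
    then show "R \<beta> = u_beta K \<sigma> \<alpha> C \<beta> q + D_beta K \<sigma> \<alpha> \<beta>"
      using u_beta_add_D_beta_eq[OF \<sigma>(1,3) \<alpha>\<sigma> q0, of \<beta> K C]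
      by (simp add: R_def P_def T_def s_def x_def y_def)
  qed simp
  have "(T \<longlongrightarrow> T1) (at_left 1)"
    unfolding T_def[abs_def] T1_def using tendsto_tail_integral_at_left_1[OF s(1) y(1)] y by simp
  then have lim: "(R \<longlongrightarrow> C + P * ((1 + x) powr (1 - s) * q powr (1 - 1) + (\<alpha> * \<sigma>) powr (1 - 1)
                 * (s - 1) / s * ((s + 1 - 1) * T1 + y powr (1 - 1) * (1 - y) powr s))) (at_left 1)"
    unfolding R_def using x q0 y s \<alpha>\<sigma> by (intro tendsto_intros) auto
  have "\<alpha> \<noteq> 0" "\<sigma> \<noteq> 0"
    using \<alpha>\<sigma> by auto
  then have lim_eq: "C + P * ((1 + x) powr (1 - s) * q powr (1 - 1) + (\<alpha> * \<sigma>) powr (1 - 1)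
                 * (s - 1) / s * ((s + 1 - 1) * T1 + y powr (1 - 1) * (1 - y) powr s))
             = C + P * ((1 + x) powr (1 - s) + (s - 1) / s * (s * T1 + (1 - y) powr s))"
    using q0 y by simp
  have val: "C + P * ((1 + x) powr (1 - s) + (s - 1) / s * (s * T1 + (1 - y) powr s))
      = K * \<sigma> / (\<sigma> - 1) * ((1 + \<alpha> * \<sigma> * q) powr (1 - 1 / \<sigma>) / q)
          * (q - (\<sigma> - 1) / (\<alpha> * \<sigma>) * hyp2F1 1 1 (1 + 1 / \<sigma>) (- 1 / (\<alpha> * \<sigma> * q))) + C"
  proof -
    define F where "F = hyp2F1 1 1 (1 + s) (- 1 / x)"
    define W where "W = (1 + x) powr (- s)"
    have x0: "x \<noteq> 0"
      using x by simp
    have tail: "s * T1 + (1 - y) powr s = W * (1 + 1 / x) * F"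
      using tail_integral_eq_hyp2F1[OF s(1) x, folded y_def] by (simp add: T1_def W_def F_def)
    have W1: "(1 + x) powr (1 - s) = (1 + x) * W"
      using x powr_add[of "1 + x" 1 "- s"] by (simp add: W_def)
    have s\<sigma>: "(s - 1) / s = 1 - \<sigma>"
      using \<sigma> by (simp add: s_def field_simps)
    have \<alpha>\<sigma>q: "(\<sigma> - 1) / (\<alpha> * \<sigma>) = (\<sigma> - 1) * q / x"
      using q0 by (simp add: x_def)
    have "C + P * ((1 + x) powr (1 - s) + (s - 1) / s * (s * T1 + (1 - y) powr s))
            = C + P * W * ((1 + x) * (1 - (\<sigma> - 1) * F / x))"
      unfolding tail W1 s\<sigma> using x0 by (simp add: field_simps)
    also have "\<dots> = P * ((1 + x) powr (1 - s) / q) * (q - (\<sigma> - 1) / (\<alpha> * \<sigma>) * F) + C"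
      unfolding W1 \<alpha>\<sigma>q using q0 x0 by (simp add: field_simps)
    finally show ?thesis
      by (simp add: P_def s_def x_def F_def)
  qed
  show ?thesis
    using tendsto_cong[OF ev] lim[unfolded lim_eq val] by blast
qed

theorem theorem2:
  fixes \<alpha> \<sigma> K C :: real
  assumes "\<alpha> \<noteq> 0" and "\<sigma> \<noteq> 0" and "\<sigma> \<noteq> 1" and "K > 0"
  shows "(\<forall>q > 0. 1 + \<alpha> * \<sigma> * q > 0 \<longrightarrow>
            ((\<lambda>\<beta>. u_beta K \<sigma> \<alpha> C \<beta> q) \<longlongrightarrow>
               K / (\<alpha> * (\<sigma> - 1)) * ((1 + \<alpha> * \<sigma> * q) powr ((\<sigma> - 1) / \<sigma>) - 1) + C)
            (at_right 0))
       \<and> (\<alpha> * \<sigma> > 0 \<and> 1 + 1 / \<sigma> > 0 \<longrightarrow>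
            (\<forall>q > 1 / (\<alpha> * \<sigma>).
              ((\<lambda>\<beta>. u_beta K \<sigma> \<alpha> C \<beta> q + D_beta K \<sigma> \<alpha> \<beta>) \<longlongrightarrow>
                 K * \<sigma> / (\<sigma> - 1) * ((1 + \<alpha> * \<sigma> * q) powr (1 - 1 / \<sigma>) / q)
                   * (q - (\<sigma> - 1) / (\<alpha> * \<sigma>) * hyp2F1 1 1 (1 + 1 / \<sigma>) (- 1 / (\<alpha> * \<sigma> * q)))
                 + C)
              (at_left 1)))"
  using assms by (blast intro: u_beta_tendsto_at_right_0 u_beta_add_D_beta_tendsto_at_left_1)

end
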